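(* Let $\mu^\ast$ be an upper quasi-density on $\mathbb{H}$, fix $k\in\mathbb{N}^+$, and let $h_1,\dots,h_n\in\mathbb{N}$ be such that $h_i\not\equiv h_j \pmod k$ for $1\le i<j\le n$. Set $\mathcal{H}:=\{h_1,\dots,h_n\}$ and $\mathcal{V}_{k,\mathcal{H}}:=\bigcup_{h\in\mathcal{H}}(k\cdot\mathbb{H}+h)$. Then for every finite $\mathcal{V}\subseteq\mathbb{H}$, $\mu^\ast(\mathcal{V}_{k,\mathcal{H}}\cup\mathcal{V})=\frac nk$ and $\mu^\ast(\mathcal{V}_{k,\mathcal{H}}\setminus\mathcal{V})\ge\frac nk$.
   Context: $\mathbb{N}=\{0,1,2,\dots\}$, $\mathbb{N}^+=\{1,2,\dots\}$; $\mathbb{H}$ is one of $\mathbb{Z},\mathbb{N},\mathbb{N}^+$. For $X\subseteq\mathbb{H}$, $k\in\mathbb{N}^+$, $h\in\mathbb{N}$, $k\cdot X+h:=\{kx+h:x\in X\}$. An upper quasi-density on $\mathbb{H}$ is a function $\mu^\ast:\mathcal{P}(\mathbb{H})\to\mathbb{R}$ with $\mu^\ast(\mathbb{H})=1$, $\mu^\ast(X)\le1$ for all $X$, $\mu^\ast(X\cup Y)\le\mu^\ast(X)+\mu^\ast(Y)$ for all $X,Y$, and $\mu^\ast(k\cdot X+h)=\frac1k\mu^\ast(X)$ for all $X\subseteq\mathbb{H}$, $h,k\in\mathbb{N}^+$. *)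

theory Defs
  imports Complex_Main "HOL-Number_Theory.Cong"
begin

text \<open>The ambient set H is one of Z, N, N+, all modelled as subsets of int.\<close>
definition admissible_domain :: "int set \<Rightarrow> bool" where
  "admissible_domain H \<longleftrightarrow> H = UNIV \<or> H = {0..} \<or> H = {1..}"

definition scale_shift :: "int \<Rightarrow> int \<Rightarrow> int set \<Rightarrow> int set" where
  "scale_shift k h X = (\<lambda>x. k * x + h) ` X"

text \<open>Upper quasi-density on H; mu is only constrained on subsets of H.\<close>
definition upper_quasi_density :: "int set \<Rightarrow> (int set \<Rightarrow> real) \<Rightarrow> bool" where
  "upper_quasi_density H mu \<longleftrightarrow>
     mu H = 1 \<and>
     (\<forall>X. X \<subseteq> H \<longrightarrow> mu X \<le> 1) \<and>
     (\<forall>X Y. X \<subseteq> H \<longrightarrow> Y \<subseteq> H \<longrightarrow> mu (X \<union> Y) \<le> mu X + mu Y) \<and>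
     (\<forall>X k h. X \<subseteq> H \<longrightarrow> k \<ge> 1 \<longrightarrow> h \<ge> 1 \<longrightarrow>
        mu (scale_shift k h X) = mu X / real_of_int k)"

end

theory Submission
  imports Defs
begin

text \<open>Finite sets are null: all singletons have the same mass by translation invariance, yet the
  image of \<open>{a}\<close> under \<open>x \<mapsto> 2x + 1\<close> has half of it. Every class \<open>K\<cdot>H + r\<close> has mass \<open>1/K\<close>,
  so the \<open>n\<close> given classes have total mass at most \<open>n/K\<close>. Adding one class for each of the
  remaining \<open>K - n\<close> residues covers \<open>H\<close> up to a finite set, so by subadditivity any set differing
  from the union of the \<open>n\<close> classes by finitely many points has mass at least \<open>1 - (K - n)/K\<close>.\<close>

lemma mem_scale_shift_iff: "x \<in> scale_shift k r X \<longleftrightarrow> (\<exists>q\<in>X. x = k * q + r)"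
  unfolding scale_shift_def by auto

lemma admissible_domain_cases:
  assumes "admissible_domain H"
  obtains "H = UNIV" | "H \<subseteq> {0..}" "\<And>q. q \<ge> 1 \<Longrightarrow> q \<in> H"
  using assms unfolding admissible_domain_def by auto

lemma admissible_domain_upward_closed:
  "admissible_domain H \<Longrightarrow> x \<in> H \<Longrightarrow> x \<le> y \<Longrightarrow> y \<in> H"
  unfolding admissible_domain_def by auto

lemma scale_shift_subset_domain:
  assumes H: "admissible_domain H" and "X \<subseteq> H" "k \<ge> 1" "r \<ge> 0"
  shows "scale_shift k r X \<subseteq> H"
proof
  fix y assume "y \<in> scale_shift k r X"
  then obtain x where x: "x \<in> H" and y: "y = k * x + r"
    using \<open>X \<subseteq> H\<close> by (auto simp: mem_scale_shift_iff)
  from H show "y \<in> H"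
  proof (cases rule: admissible_domain_cases)
    case 2
    then have "x \<ge> 0" using x by auto
    then have "x \<le> y" using y \<open>k \<ge> 1\<close> \<open>r \<ge> 0\<close> mult_right_mono[of 1 k x] by simp
    then show ?thesis using admissible_domain_upward_closed[OF H x] by simp
  qed simp
qed

lemma residue_classes_cover_cofinite:
  fixes K :: int and R :: "int set"
  assumes H: "admissible_domain H" and "K \<ge> 1" and "finite R"
    and residues: "{0..<K} \<subseteq> (\<lambda>r. r mod K) ` R"
  shows "finite (H - (\<Union>r\<in>R. scale_shift K r H))"
proof -
  have "x \<in> (\<Union>r\<in>R. {0..r})" if x: "x \<in> H" "x \<notin> (\<Union>r\<in>R. scale_shift K r H)" for x
  proof -
    have "x mod K \<in> {0..<K}" using \<open>K \<ge> 1\<close> by simp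
    then obtain r where r: "r \<in> R" "x mod K = r mod K" using residues by blast
    define q where "q = (x - r) div K"
    have "K dvd x - r" using r(2) by (simp add: mod_eq_dvd_iff)
    then have x_eq: "x = K * q + r" unfolding q_def by simp
    have "q \<notin> H"
      using x r(1) x_eq by (auto simp: mem_scale_shift_iff)
    from H show ?thesis
    proof (cases rule: admissible_domain_cases)
      case 2
      have "\<not> K * q > 0" using \<open>q \<notin> H\<close> 2(2) \<open>K \<ge> 1\<close> by (auto simp: zero_less_mult_iff)
      then have "x \<in> {0..r}" using x(1) 2(1) x_eq by auto
      then show ?thesis using r(1) by blast
    qed (use \<open>q \<notin> H\<close> in simp)
  qed
  then have "H - (\<Union>r\<in>R. scale_shift K r H) \<subseteq> (\<Union>r\<in>R. {0..r})" by blast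
  moreover have "finite (\<Union>r\<in>R. {0..r})" using \<open>finite R\<close> by simp
  ultimately show ?thesis by (rule finite_subset)
qed

lemma noncongruent_image_inj_card:
  fixes h :: "nat \<Rightarrow> nat" and k n :: nat
  assumes "\<forall>i j. 1 \<le> i \<longrightarrow> i < j \<longrightarrow> j \<le> n \<longrightarrow> \<not> [h i = h j] (mod k)"
  shows "inj_on (\<lambda>r. r mod int k) ((\<lambda>i. int (h i)) ` {1..n})"
    and "card ((\<lambda>i. int (h i)) ` {1..n}) = n"
proof -
  have "inj_on ((\<lambda>r. r mod int k) \<circ> (\<lambda>i. int (h i))) {1..n}"
  proof (rule inj_onI)
    fix i j assume ij: "i \<in> {1..n}" "j \<in> {1..n}"
      and "((\<lambda>r. r mod int k) \<circ> (\<lambda>i. int (h i))) i = ((\<lambda>r. r mod int k) \<circ> (\<lambda>i. int (h i))) j"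
    then have "[h i = h j] (mod k)" "[h j = h i] (mod k)"
      unfolding cong_def by (simp_all flip: zmod_int)
    then show "i = j"
      using assms ij by (meson atLeastAtMost_iff linorder_neqE_nat)
  qed
  then show "inj_on (\<lambda>r. r mod int k) ((\<lambda>i. int (h i)) ` {1..n})"
    and "card ((\<lambda>i. int (h i)) ` {1..n}) = n"
    using inj_on_imageI card_image[OF inj_on_imageI2] by fastforce+
qed

locale quasi_density_space =
  fixes H :: "int set" and mu :: "int set \<Rightarrow> real"
  assumes admissible: "admissible_domain H"
    and quasi_density: "upper_quasi_density H mu"
begin

lemma mu_domain: "mu H = 1"
  using quasi_density unfolding upper_quasi_density_def by auto

lemma mu_Un_le: "X \<subseteq> H \<Longrightarrow> Y \<subseteq> H \<Longrightarrow> mu (X \<union> Y) \<le> mu X + mu Y"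
  using quasi_density unfolding upper_quasi_density_def by auto

lemma mu_scale_shift: "X \<subseteq> H \<Longrightarrow> k \<ge> 1 \<Longrightarrow> h \<ge> 1 \<Longrightarrow> mu (scale_shift k h X) = mu X / k"
  using quasi_density unfolding upper_quasi_density_def by auto

lemma mu_nonneg: "X \<subseteq> H \<Longrightarrow> mu X \<ge> 0"
  using mu_Un_le[of X X] by simp

lemma mu_empty: "mu {} = 0"
  using mu_scale_shift[of "{}" 2 1] by (simp add: scale_shift_def)

lemma mu_singleton_shift: "a \<in> H \<Longrightarrow> a < b \<Longrightarrow> mu {b} = mu {a}"
  using mu_scale_shift[of "{a}" 1 "b - a"] by (simp add: scale_shift_def)

lemma mu_singleton:
  assumes a: "a \<in> H"
  shows "mu {a} = 0"
proof -
  have image: "scale_shift 2 1 {a} = {2 * a + 1}" by (simp add: scale_shift_def)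
  have "2 * a + 1 \<in> H"
    using scale_shift_subset_domain[OF admissible, of "{a}" 2 1] a image by simp
  then have "mu {2 * a + 1} = mu {a}"
    using mu_singleton_shift[OF a, of "2 * a + 1"] mu_singleton_shift[of "2 * a + 1" a]
    by (metis linorder_neqE_linordered_idom)
  moreover have "mu {2 * a + 1} = mu {a} / 2"
    using mu_scale_shift[of "{a}" 2 1] a image by simp
  ultimately show ?thesis by simp
qed

lemma mu_finite: "finite F \<Longrightarrow> F \<subseteq> H \<Longrightarrow> mu F = 0"
proof (induction F rule: finite_induct)
  case empty
  show ?case by (rule mu_empty)
next
  case (insert a F)
  have "mu (insert a F) \<le> mu {a} + mu F"
    using mu_Un_le[of "{a}" F] insert.prems by simp
  with insert mu_singleton mu_nonneg[of "insert a F"] show ?case by simp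
qed

lemma mu_residue_class:
  assumes "K \<ge> 1" "r \<ge> 0"
  shows "mu (scale_shift K r H) = 1 / K"
proof (cases "r \<ge> 1")
  case True
  then show ?thesis using mu_scale_shift[of H K r] assms mu_domain by simp
next
  case False
  then have "r = 0" using assms by simp
  \<comment> \<open>Shifting \<open>K\<cdot>H\<close> by \<open>K\<close> gives \<open>K\<cdot>H + K\<close>, to which the axiom applies.\<close>
  have "scale_shift 1 K (scale_shift K 0 H) = scale_shift K K H"
    unfolding scale_shift_def by (auto simp: image_image algebra_simps)
  moreover have "scale_shift K 0 H \<subseteq> H"
    using assms by (intro scale_shift_subset_domain[OF admissible]) auto
  ultimately have "mu (scale_shift K 0 H) = mu (scale_shift K K H)"
    using mu_scale_shift[of "scale_shift K 0 H" 1 K] assms by simp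
  with \<open>r = 0\<close> show ?thesis using mu_scale_shift[of H K K] assms mu_domain by simp
qed

lemma residue_classes_subset:
  "K \<ge> 1 \<Longrightarrow> R \<subseteq> {0..} \<Longrightarrow> (\<Union>r\<in>R. scale_shift K r H) \<subseteq> H"
  using scale_shift_subset_domain[OF admissible, of H K] by blast

lemma mu_residue_classes_le:
  assumes "K \<ge> 1" "finite R" "R \<subseteq> {0..}"
  shows "mu (\<Union>r\<in>R. scale_shift K r H) \<le> card R / K"
  using assms(2,3)
proof (induction R rule: finite_induct)
  case empty
  show ?case using mu_empty by simp
next
  case (insert a R)
  have "mu (\<Union>r\<in>insert a R. scale_shift K r H)
        \<le> mu (scale_shift K a H) + mu (\<Union>r\<in>R. scale_shift K r H)"
    using mu_Un_le residue_classes_subset[of K "insert a R"] \<open>K \<ge> 1\<close> insert.prems by simp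
  also have "\<dots> \<le> 1 / K + card R / K"
    using mu_residue_class \<open>K \<ge> 1\<close> insert by auto
  finally show ?case using insert by (simp add: add_divide_distrib)
qed

lemma mu_residue_classes_Un_finite_le:
  assumes "K \<ge> 1" "finite R" "R \<subseteq> {0..}" "finite V" "V \<subseteq> H"
  shows "mu ((\<Union>r\<in>R. scale_shift K r H) \<union> V) \<le> card R / K"
proof -
  have "mu ((\<Union>r\<in>R. scale_shift K r H) \<union> V) \<le> mu (\<Union>r\<in>R. scale_shift K r H) + mu V"
    using mu_Un_le residue_classes_subset assms(1,3,5) by blast
  also have "\<dots> \<le> card R / K"
    using mu_residue_classes_le[OF assms(1-3)] mu_finite[OF assms(4,5)] by simp
  finally show ?thesis .
qed

lemma mu_ge_if_almost_contains_residue_classes: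
  fixes K :: int and R V X :: "int set"
  assumes "K \<ge> 1" "finite R" "R \<subseteq> {0..}" "inj_on (\<lambda>r. r mod K) R" "finite V"
    and X: "(\<Union>r\<in>R. scale_shift K r H) - V \<subseteq> X" "X \<subseteq> H"
  shows "mu X \<ge> card R / K"
proof -
  define C where "C = {0..<K} - (\<lambda>r. r mod K) ` R"
  define E where "E = H - (\<Union>r\<in>R \<union> C. scale_shift K r H)"
  have residues_R: "(\<lambda>r. r mod K) ` R \<subseteq> {0..<K}" using \<open>K \<ge> 1\<close> by auto
  have card_C: "real (card C) = K - card R"
    using card_Diff_subset[OF _ residues_R] card_image[OF assms(4)] card_mono[OF _ residues_R] assms(2)
    unfolding C_def using \<open>K \<ge> 1\<close> by simp
  have "finite E" unfolding E_def
  proof (rule residue_classes_cover_cofinite[OF admissible \<open>K \<ge> 1\<close>])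
    show "{0..<K} \<subseteq> (\<lambda>r. r mod K) ` (R \<union> C)"
    proof
      fix x assume x: "x \<in> {0..<K}"
      then have "x \<in> (\<lambda>r. r mod K) ` R \<or> x \<in> C" by (auto simp: C_def)
      moreover have "x mod K = x" using x by simp
      ultimately show "x \<in> (\<lambda>r. r mod K) ` (R \<union> C)" by (metis UnI1 UnI2 image_Un image_eqI)
    qed
  qed (use assms(2) in \<open>simp add: C_def\<close>)
  let ?B = "\<Union>r\<in>C. scale_shift K r H" and ?N = "V \<inter> H \<union> E"
  have "C \<subseteq> {0..}" unfolding C_def by auto
  then have B: "?B \<subseteq> H" using residue_classes_subset \<open>K \<ge> 1\<close> by blast
  have N: "?N \<subseteq> H" unfolding E_def by blast
  have cover: "X \<union> (?B \<union> ?N) = H"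
    using X B unfolding E_def by blast
  have "1 = mu (X \<union> (?B \<union> ?N))"
    by (simp only: cover mu_domain)
  also have "\<dots> \<le> mu X + (mu ?B + mu ?N)"
    using mu_Un_le[of X "?B \<union> ?N"] mu_Un_le[OF B N] X(2) B N by simp
  finally have "1 \<le> mu X + (mu ?B + mu ?N)" .
  moreover have "mu ?N = 0"
    using mu_finite N \<open>finite V\<close> \<open>finite E\<close> by simp
  moreover have "mu ?B \<le> card C / K"
    using mu_residue_classes_le \<open>K \<ge> 1\<close> \<open>C \<subseteq> {0..}\<close> by (simp add: C_def)
  moreover have "real (card C) / K = 1 - card R / K"
    using card_C \<open>K \<ge> 1\<close> by (simp add: field_simps)
  ultimately show ?thesis by linarith
qed

end

theorem mainTheorem6:
  fixes H :: "int set" and mu :: "int set \<Rightarrow> real"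
    and k n :: nat and h :: "nat \<Rightarrow> nat" and V :: "int set"
  assumes "admissible_domain H"
    and "upper_quasi_density H mu"
    and "k \<ge> 1"
    and "n \<ge> 1"
    and "\<forall>i j. 1 \<le> i \<longrightarrow> i < j \<longrightarrow> j \<le> n \<longrightarrow> \<not> [h i = h j] (mod k)"
    and "finite V" and "V \<subseteq> H"
  shows "mu ((\<Union>r\<in>h ` {1..n}. scale_shift (int k) (int r) H) \<union> V) = real n / real k
    \<and> mu ((\<Union>r\<in>h ` {1..n}. scale_shift (int k) (int r) H) - V) \<ge> real n / real k"
proof -
  interpret quasi_density_space H mu using assms(1,2) by unfold_locales
  define R where "R = (\<lambda>i. int (h i)) ` {1..n}"
  let ?A = "\<Union>r\<in>R. scale_shift (int k) r H"
  have inj: "inj_on (\<lambda>r. r mod int k) R" and "card R = n"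
    using noncongruent_image_inj_card[OF assms(5)] unfolding R_def by blast+
  have R: "finite R" "R \<subseteq> {0..}" unfolding R_def by auto
  have A: "?A \<subseteq> H" using residue_classes_subset R assms(3) by simp
  have lower: "n / k \<le> mu X" if "?A - V \<subseteq> X" "X \<subseteq> H" for X
    using mu_ge_if_almost_contains_residue_classes[OF _ R inj assms(6) that] assms(3) \<open>card R = n\<close>
    by simp
  have "mu (?A \<union> V) \<le> n / k"
    using mu_residue_classes_Un_finite_le[of "int k", OF _ R assms(6,7)] assms(3) \<open>card R = n\<close> by simp
  moreover have "mu (?A \<union> V) \<ge> n / k" and "mu (?A - V) \<ge> n / k"
    using A assms(7) by (auto intro: lower)
  moreover have "(\<Union>r\<in>h ` {1..n}. scale_shift (int k) (int r) H) = ?A"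
    unfolding R_def by auto
  ultimately show ?thesis by simp
qed

end
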